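(* Let $a,b,c,d,e\in\mathbb{R}$ and let $\alpha_i(t)$ ($i=1,\dots,5$) be arbitrary scalar continuous odd functions on $\mathbb{R}$. Consider the generalized Langford system $$\dot x=ax+by+xz,\quad \dot y=cx+dy+yz,\quad \dot z=ez-(x^2+y^2+z^2),\qquad (x,y,z)\in\mathbb{R}^3. \tag{L}$$ Then: (i) the Mironenko reflecting function of (L) coincides with that of the system $$\dot x=(ax+by+xz)(1+\alpha_1(t)),\quad \dot y=(cx+dy+yz)(1+\alpha_1(t)),\quad \dot z=\big(ez-(x^2+y^2+z^2)\big)(1+\alpha_1(t));$$ (ii) if $c=-b$, $d=a$, the Mironenko reflecting function of (L) coincides with that of the system $$\begin{aligned}\dot x&=(ax+by+xz)(1+\alpha_1(t))+x(a+z)\alpha_2(t)+y\alpha_3(t),\\ \dot y&=(-bx+ay+yz)(1+\alpha_1(t))+y(a+z)\alpha_2(t)-x\alpha_3(t),\\ \dot z&=(ez-x^2-y^2-z^2)(1+\alpha_1(t)+\alpha_2(t));\end{aligned}$$ (iii) if $c=-b$, $d=a$, $e=-2a$, the Mironenko reflecting function of (L) coincides with that of the system $$\begin{aligned}\dot x&=(ax+by+xz)(1+\alpha_1(t))+x(a+z)\alpha_2(t)+y\alpha_3(t)-y(x^2+y^2)(4az+x^2+y^2+2z^2)\alpha_4(t),\\ \dot y&=(-bx+ay+yz)(1+\alpha_1(t))+y(a+z)\alpha_2(t)-x\alpha_3(t)+x(x^2+y^2)(4az+x^2+y^2+2z^2)\alpha_4(t),\\ \dot z&=-(2az+x^2+y^2+z^2)(1+\alpha_1(t)+\alpha_2(t));\end{aligned}$$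 (iv) if $c=b=0$, $d=a$, $e=-2a$, the Mironenko reflecting function of (L) coincides with that of the system $$\begin{aligned}\dot x&=(ax+xz)(1+\alpha_1(t))+y\alpha_2(t)+y(4az+x^2+y^2+2z^2)\big(x^2\alpha_3(t)+xy\alpha_4(t)+y^2\alpha_5(t)\big),\\ \dot y&=(ay+yz)(1+\alpha_1(t))-x\alpha_2(t)-x(4az+x^2+y^2+2z^2)\big(x^2\alpha_3(t)+xy\alpha_4(t)+y^2\alpha_5(t)\big),\\ \dot z&=-(2az+x^2+y^2+z^2)(1+\alpha_1(t)).\end{aligned}$$
   Context: For a system $\dot x=X(t,x)$, $t\in\mathbb{R}$, $x\in D\subset\mathbb{R}^n$, with continuously differentiable right-hand side, let $x=\varphi(t;t_0,x_0)$ denote its general solution in Cauchy form (the solution with $\varphi(t_0;t_0,x_0)=x_0$). The Mironenko reflecting function (MRF) of the system is $F(t,x):=\varphi(-t;t,x)$, defined where this makes sense. *)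

theory Defs
  imports "HOL-Analysis.Analysis"
begin

type_synonym vf = "real \<Rightarrow> real \<times> real \<times> real \<Rightarrow> real \<times> real \<times> real"

definition is_solution_on :: "vf \<Rightarrow> real set \<Rightarrow> (real \<Rightarrow> real \<times> real \<times> real) \<Rightarrow> bool" where
  "is_solution_on X I u \<longleftrightarrow> is_interval I \<and>
     (\<forall>s\<in>I. (u has_vector_derivative X s (u s)) (at s within I))"

text \<open>Graph of the Mironenko reflecting function F(t,p) = phi(-t; t, p):
  F is defined at (t,p) with value q iff the solution through (t,p)
  exists on the segment between t and -t and takes the value q at -t.\<close>
definition mrf_graph :: "vf \<Rightarrow> real \<Rightarrow> real \<times> real \<times> real \<Rightarrow> real \<times> real \<times> real \<Rightarrow> bool" where
  "mrf_graph X t p q \<longleftrightarrow>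
     (\<exists>u. is_solution_on X (closed_segment (-t) t) u \<and> u t = p \<and> u (-t) = q)"

definition same_mrf :: "vf \<Rightarrow> vf \<Rightarrow> bool" where
  "same_mrf X Y \<longleftrightarrow> (\<forall>t p q r. mrf_graph X t p q \<and> mrf_graph Y t p r \<longrightarrow> q = r)"

definition odd_cont :: "(real \<Rightarrow> real) \<Rightarrow> bool" where
  "odd_cont f \<longleftrightarrow> continuous_on UNIV f \<and> (\<forall>t. f (-t) = - f t)"

definition langford :: "real \<Rightarrow> real \<Rightarrow> real \<Rightarrow> real \<Rightarrow> real \<Rightarrow> vf" where
  "langford a b c d e = (\<lambda>t (x, y, z).
     (a*x + b*y + x*z, c*x + d*y + y*z, e*z - (x^2 + y^2 + z^2)))"

end

theory Submission
  imports Defs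
begin

(* Every system in the theorem has the form Y t p = (1 + beta t) X p + kappa t p R p, where X is the
   Langford field, beta is odd and R (x, y, z) = (y, -x, 0) generates the rotations about the z-axis.
   A solution of (1 + beta t) X p is a solution of X run with the clock t |-> integral of 1 + beta;
   since beta is odd, this clock needs the same time -2 t as the clock of X to get from t to -t, so
   both systems have the same reflecting function. Comparing the two solutions uses a global solution
   of X, which exists once X is truncated outside a ball containing both orbits.
   In (ii)-(iv) X commutes with the rotations, and rotating a solution of Y by the angle
   D t = integral of kappa removes the R-term; the reflecting function is unaffected as soon as D is
   even. In (ii) kappa is odd in t, and in (iii) it depends on p only through the first integral
   (x^2 + y^2) (4 a z + x^2 + y^2 + 2 z^2). In (iv) the rotated solution keeps the direction of its
   planar part, so along a solution D satisfies a scalar equation D' = Phi t D with Phi odd in t,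
   and uniqueness of solutions makes D even. *)

section \<open>Solutions of ODEs on intervals\<close>

definition ode_solution :: "(real \<Rightarrow> 'a::real_normed_vector \<Rightarrow> 'a) \<Rightarrow> real set \<Rightarrow> (real \<Rightarrow> 'a) \<Rightarrow> bool"
  where "ode_solution F I u \<longleftrightarrow> (\<forall>s\<in>I. (u has_vector_derivative F s (u s)) (at s within I))"

lemma ode_solutionD:
  "ode_solution F I u \<Longrightarrow> s \<in> I \<Longrightarrow> (u has_vector_derivative F s (u s)) (at s within I)"
  unfolding ode_solution_def by blast

lemma ode_solution_cong:
  assumes "ode_solution F I u" "\<And>s. s \<in> I \<Longrightarrow> F s (u s) = G s (u s)"
  shows "ode_solution G I u"
  using assms unfolding ode_solution_def by auto

lemma ode_solution_subset: "ode_solution F I u \<Longrightarrow> J \<subseteq> I \<Longrightarrow> ode_solution F J u"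
  unfolding ode_solution_def by (auto intro: has_vector_derivative_within_subset)

lemma ode_solution_continuous_on: "ode_solution F I u \<Longrightarrow> continuous_on I u"
  unfolding ode_solution_def has_vector_derivative_def by (rule has_derivative_continuous_on) blast

lemma ode_solution_reparametrize:
  assumes u: "ode_solution F I u"
    and \<phi>: "\<And>s. s \<in> J \<Longrightarrow> (\<phi> has_real_derivative \<phi>' s) (at s within J)" and "\<phi> ` J \<subseteq> I"
  shows "ode_solution (\<lambda>s x. \<phi>' s *\<^sub>R F (\<phi> s) x) J (\<lambda>s. u (\<phi> s))"
  unfolding ode_solution_def
proof
  fix s assume s: "s \<in> J"
  have "(u has_vector_derivative F (\<phi> s) (u (\<phi> s))) (at (\<phi> s) within \<phi> ` J)"
    using ode_solutionD[OF u] s assms(3) by (blast intro: has_vector_derivative_within_subset)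
  with \<phi>[OF s] show "((\<lambda>s. u (\<phi> s)) has_vector_derivative \<phi>' s *\<^sub>R F (\<phi> s) (u (\<phi> s))) (at s within J)"
    using vector_diff_chain_within unfolding has_real_derivative_iff_has_vector_derivative o_def by blast
qed

lemma ode_solution_shift:
  assumes "ode_solution F {a..b} u"
  shows "ode_solution (\<lambda>s. F (s - c)) {a + c..b + c} (\<lambda>s. u (s - c))"
proof -
  have "ode_solution (\<lambda>s x. 1 *\<^sub>R F (s - c) x) {a + c..b + c} (\<lambda>s. u (s - c))"
    by (rule ode_solution_reparametrize[OF assms]) (auto intro!: derivative_eq_intros)
  then show ?thesis by simp
qed

lemma ode_solution_reflect:
  assumes "ode_solution F {a..b} u"
  shows "ode_solution (\<lambda>s x. - F (- s) x) {-b..-a} (\<lambda>s. u (- s))"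
proof -
  have "ode_solution (\<lambda>s x. (-1) *\<^sub>R F (- s) x) {-b..-a} (\<lambda>s. u (- s))"
    by (rule ode_solution_reparametrize[OF assms]) (auto intro!: derivative_eq_intros)
  then show ?thesis by simp
qed

lemma ode_solution_append:
  assumes "a \<le> b" "b \<le> c" and u: "ode_solution F {a..b} u" and v: "ode_solution F {b..c} v"
    and "u b = v b"
  shows "ode_solution F {a..c} (\<lambda>s. if s \<in> {a..b} then u s else v s)"
  unfolding ode_solution_def
proof
  fix s assume "s \<in> {a..c}"
  then have s: "s \<in> {a..b} \<union> {b..c}" by auto
  have "((\<lambda>s. if s \<in> {a..b} then u s else v s) has_vector_derivative
      (if s \<in> {a..b} then F s (u s) else F s (v s))) (at s within {a..c})"
    by (rule has_vector_derivative_If_within_closures[OF s])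
      (use assms ode_solutionD[OF u] ode_solutionD[OF v] in \<open>auto simp: insert_absorb\<close>)
  then show "((\<lambda>s. if s \<in> {a..b} then u s else v s) has_vector_derivative
      F s (if s \<in> {a..b} then u s else v s)) (at s within {a..c})"
    by (simp add: if_distrib[of "F s"])
qed

section \<open>Uniqueness\<close>

lemma gronwall_vanishing_forward:
  fixes \<phi> :: "real \<Rightarrow> real"
  assumes cont: "continuous_on {a..b} \<phi>"
    and der: "\<And>x. a < x \<Longrightarrow> x < b \<Longrightarrow> \<exists>D. (\<phi> has_real_derivative D) (at x) \<and> \<bar>D\<bar> \<le> L * \<phi> x"
    and "a \<le> b" "\<phi> a = 0" "0 \<le> \<phi> b"
  shows "\<phi> b = 0"
proof -
  define \<psi> where "\<psi> x = \<phi> x * exp (- L * x)" for x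
  have "\<psi> b \<le> \<psi> a"
  proof (rule DERIV_nonpos_imp_decreasing_open[OF \<open>a \<le> b\<close>])
    fix x assume "a < x" "x < b"
    then obtain D where D: "(\<phi> has_real_derivative D) (at x)" "\<bar>D\<bar> \<le> L * \<phi> x"
      using der by blast
    have "(\<psi> has_real_derivative (D - L * \<phi> x) * exp (- L * x)) (at x)"
      unfolding \<psi>_def by (auto intro!: derivative_eq_intros D(1) simp: algebra_simps)
    moreover have "(D - L * \<phi> x) * exp (- L * x) \<le> 0"
      using D(2) by (intro mult_nonpos_nonneg) auto
    ultimately show "\<exists>y. (\<psi> has_real_derivative y) (at x) \<and> y \<le> 0" by blast
  next
    show "continuous_on {a..b} \<psi>" unfolding \<psi>_def by (intro continuous_intros cont)
  qed
  then show ?thesis using assms by (simp add: \<psi>_def mult_le_0_iff)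
qed

lemma gronwall_vanishing:
  fixes \<phi> :: "real \<Rightarrow> real"
  assumes cont: "continuous_on {a..b} \<phi>"
    and der: "\<And>x. a < x \<Longrightarrow> x < b \<Longrightarrow> \<exists>D. (\<phi> has_real_derivative D) (at x) \<and> \<bar>D\<bar> \<le> L * \<phi> x"
    and nonneg: "\<And>x. x \<in> {a..b} \<Longrightarrow> 0 \<le> \<phi> x"
    and s0: "s0 \<in> {a..b}" "\<phi> s0 = 0" and s: "s \<in> {a..b}"
  shows "\<phi> s = 0"
proof (cases "s0 \<le> s")
  case True
  show ?thesis
    by (rule gronwall_vanishing_forward[OF continuous_on_subset[OF cont] der True])
      (use assms in auto)
next
  case False
  define \<psi> where "\<psi> x = \<phi> (- x)" for x
  have "\<psi> (- s) = 0"
  proof (rule gronwall_vanishing_forward[where a="- s0" and b="- s"])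
    show "continuous_on {- s0..- s} \<psi>" unfolding \<psi>_def[abs_def]
      by (rule continuous_on_compose2[OF cont]) (use s0 s in \<open>auto intro: continuous_intros\<close>)
    fix x assume "- s0 < x" "x < - s"
    then have "a < - x" "- x < b" using s0 s by auto
    then obtain D where D: "(\<phi> has_real_derivative D) (at (- x))" "\<bar>D\<bar> \<le> L * \<phi> (- x)"
      using der by blast
    have "(\<psi> has_real_derivative - D) (at x)"
      unfolding \<psi>_def using DERIV_chain2[where g=uminus, OF D(1), of "- 1" UNIV]
      by (simp add: DERIV_minus)
    then show "\<exists>D. (\<psi> has_real_derivative D) (at x) \<and> \<bar>D\<bar> \<le> L * \<psi> x"
      using D(2) unfolding \<psi>_def by force
  qed (use False assms in \<open>auto simp: \<psi>_def\<close>)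
  then show ?thesis by (simp add: \<psi>_def)
qed

lemma ode_solution_unique:
  fixes u v :: "real \<Rightarrow> 'a::real_inner"
  assumes lip: "\<And>s. s \<in> {a..b} \<Longrightarrow> L-lipschitz_on UNIV (F s)"
    and u: "ode_solution F {a..b} u" and v: "ode_solution F {a..b} v"
    and "s0 \<in> {a..b}" "u s0 = v s0" and s: "s \<in> {a..b}"
  shows "u s = v s"
proof -
  define \<phi> where "\<phi> x = inner (u x - v x) (u x - v x)" for x
  have "\<phi> s = 0"
  proof (rule gronwall_vanishing[of a b \<phi> "2 * L" s0])
    show "continuous_on {a..b} \<phi>" unfolding \<phi>_def
      using ode_solution_continuous_on[OF u] ode_solution_continuous_on[OF v] by (intro continuous_intros)
  next
    fix x assume "a < x" "x < b"
    then have x: "x \<in> {a..b}" and at: "at x within {a..b} = at x" by (auto intro!: at_within_interior)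
    let ?d = "F x (u x) - F x (v x)"
    have "((\<lambda>x. u x - v x) has_vector_derivative ?d) (at x)"
      using ode_solutionD[OF u x] ode_solutionD[OF v x] unfolding at by (rule has_vector_derivative_diff)
    then have hd: "((\<lambda>x. u x - v x) has_derivative (\<lambda>h. h *\<^sub>R ?d)) (at x)"
      by (simp add: has_vector_derivative_def)
    have "(\<phi> has_real_derivative 2 * inner (u x - v x) ?d) (at x)"
      unfolding \<phi>_def has_field_derivative_def
      by (rule has_derivative_eq_rhs[OF has_derivative_inner[OF hd hd]])
        (auto simp: fun_eq_iff inner_commute algebra_simps)
    moreover have "\<bar>inner (u x - v x) ?d\<bar> \<le> L * \<phi> x"
    proof -
      have "\<bar>inner (u x - v x) ?d\<bar> \<le> norm (u x - v x) * norm ?d" by (rule Cauchy_Schwarz_ineq2)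
      also have "\<dots> \<le> norm (u x - v x) * (L * norm (u x - v x))"
        using lipschitz_on_normD[OF lip[OF x]] by (intro mult_left_mono) auto
      also have "\<dots> = L * \<phi> x"
        by (simp add: \<phi>_def power2_norm_eq_inner[symmetric] power2_eq_square)
      finally show ?thesis .
    qed
    ultimately show "\<exists>D. (\<phi> has_real_derivative D) (at x) \<and> \<bar>D\<bar> \<le> 2 * L * \<phi> x" by force
  qed (use assms in \<open>auto simp: \<phi>_def\<close>)
  then show ?thesis by (simp add: \<phi>_def)
qed

lemma ode_solution_odd_field_even:
  fixes D :: "real \<Rightarrow> 'a::real_inner"
  assumes lip: "\<And>s. s \<in> {-T..T} \<Longrightarrow> L-lipschitz_on UNIV (F s)" and odd: "\<And>s x. F (- s) x = - F s x"
    and D: "ode_solution F {-T..T} D" and s: "s \<in> {-T..T}"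
  shows "D (- s) = D s"
proof -
  have "ode_solution F {-T..T} (\<lambda>s. D (- s))"
    using ode_solution_reflect[OF D] by (simp add: odd)
  moreover have "0 \<in> {-T..T}" using s by auto
  ultimately show ?thesis using ode_solution_unique[OF lip _ D _ _ s, of "\<lambda>s. D (- s)" 0] by simp
qed

lemma scalar_linear_ode_exp:
  fixes y m M :: "real \<Rightarrow> real"
  assumes "convex I" and M: "\<And>s. s \<in> I \<Longrightarrow> (M has_real_derivative m s) (at s within I)"
    and y: "\<And>s. s \<in> I \<Longrightarrow> (y has_real_derivative m s * y s) (at s within I)"
    and "s0 \<in> I" "s \<in> I"
  shows "y s = exp (M s - M s0) * y s0"
proof -
  have "\<exists>c. \<forall>s\<in>I. exp (- M s) * y s = c"
  proof (rule has_derivative_zero_constant[OF \<open>convex I\<close>])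
    fix s assume s: "s \<in> I"
    have "((\<lambda>s. exp (- M s) * y s) has_real_derivative 0) (at s within I)"
      by (rule derivative_eq_intros M y s refl | simp add: algebra_simps)+
    then show "((\<lambda>s. exp (- M s) * y s) has_derivative (\<lambda>h. 0)) (at s within I)"
      by (simp only: has_field_derivative_def lambda_zero)
  qed
  then obtain c where "\<forall>s\<in>I. exp (- M s) * y s = c" by blast
  then have "exp (- M s) * y s = exp (- M s0) * y s0" using assms(4,5) by simp
  then show ?thesis by (simp add: exp_diff exp_minus field_simps)
qed

section \<open>Existence for Lipschitz fields\<close>

(* The upper limit is clamped to [0, h], which makes the step a bounded continuous function on the
   whole line, so that the fixed point can be found in the Banach space real \<Rightarrow>\<^sub>C 'a. *)
definition picard_step :: "('a::banach \<Rightarrow> 'a) \<Rightarrow> 'a \<Rightarrow> real \<Rightarrow> (real \<Rightarrow>\<^sub>C 'a) \<Rightarrow> real \<Rightarrow> 'a"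
  where "picard_step F x0 h f s = x0 + integral {0..max 0 (min h s)} (\<lambda>r. F (f r))"

lemma picard_step_bcontfun:
  assumes "L-lipschitz_on UNIV F" "0 \<le> h"
  shows "picard_step F x0 h f \<in> bcontfun"
proof -
  define c where "c s = max 0 (min h s)" for s :: real
  have c: "c s \<in> {0..h}" "s \<in> {0..h} \<Longrightarrow> c s = s" for s
    using assms(2) by (auto simp: c_def)
  have Ff: "continuous_on A (\<lambda>r. F (f r))" for A
    by (rule continuous_on_compose2[OF lipschitz_on_continuous_on[OF assms(1)]]) auto
  have "continuous_on {0..h} (\<lambda>u. integral {0..u} (\<lambda>r. F (f r)))"
    by (intro indefinite_integral_continuous_1 integrable_continuous_real Ff)
  then have "continuous_on UNIV (\<lambda>s. integral {0..c s} (\<lambda>r. F (f r)))"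
    by (rule continuous_on_compose2) (use c in \<open>auto simp: c_def intro!: continuous_intros\<close>)
  then have cont: "continuous_on UNIV (picard_step F x0 h f)"
    unfolding picard_step_def c_def[symmetric] by (intro continuous_intros)
  have "range (picard_step F x0 h f) \<subseteq> picard_step F x0 h f ` {0..h}"
    using c by (auto simp: picard_step_def c_def[symmetric] intro!: image_eqI[where x="c _"])
  moreover have "compact (picard_step F x0 h f ` {0..h})"
    by (rule compact_continuous_image[OF continuous_on_subset[OF cont]]) auto
  ultimately show ?thesis
    unfolding bcontfun_def using cont bounded_subset compact_imp_bounded by blast
qed

lemma picard_step_contraction:
  assumes lip: "L-lipschitz_on UNIV F" and "0 \<le> h"
  shows "dist (picard_step F x0 h f s) (picard_step F x0 h g s) \<le> h * L * dist f g"
proof -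
  define c where "c = max 0 (min h s)"
  have c: "0 \<le> c" "c \<le> h" using assms(2) by (auto simp: c_def)
  have cont: "continuous_on {0..c} (\<lambda>r. F (k r))" for k :: "real \<Rightarrow>\<^sub>C _"
    by (rule continuous_on_compose2[OF lipschitz_on_continuous_on[OF lip]]) auto
  have "dist (picard_step F x0 h f s) (picard_step F x0 h g s)
      = norm (integral {0..c} (\<lambda>r. F (f r) - F (g r)))"
    by (simp add: picard_step_def c_def[symmetric] dist_norm integral_diff
        integrable_continuous_real cont)
  also have "\<dots> \<le> (L * dist f g) * (c - 0)"
  proof (rule integral_bound)
    fix r
    have "norm (F (f r) - F (g r)) \<le> L * norm (f r - g r)"
      using lipschitz_on_normD[OF lip] by blast
    also have "\<dots> \<le> L * dist f g"
      using dist_bounded[of f r g] lipschitz_on_nonneg[OF lip]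
      by (intro mult_left_mono) (auto simp: dist_norm)
    finally show "norm (F (f r) - F (g r)) \<le> L * dist f g" .
  qed (use c cont in \<open>auto intro!: continuous_intros\<close>)
  also have "\<dots> \<le> (L * dist f g) * h"
    using c lipschitz_on_nonneg[OF lip] by (intro mult_left_mono) auto
  finally show ?thesis by (simp add: ac_simps)
qed

lemma ode_solution_of_integral_equation:
  fixes F :: "'a::banach \<Rightarrow> 'a"
  assumes F: "continuous_on UNIV F" and W: "continuous_on {a..b} W"
    and eq: "\<And>s. s \<in> {a..b} \<Longrightarrow> W s = x0 + integral {a..s} (\<lambda>r. F (W r))"
  shows "ode_solution (\<lambda>s. F) {a..b} W"
  unfolding ode_solution_def
proof
  fix s assume s: "s \<in> {a..b}"
  have "continuous_on {a..b} (\<lambda>r. F (W r))"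
    by (rule continuous_on_compose2[OF F W]) auto
  then have "((\<lambda>u. x0 + integral {a..u} (\<lambda>r. F (W r))) has_vector_derivative F (W s))
      (at s within {a..b})"
    by (auto intro!: derivative_eq_intros integral_has_vector_derivative s)
  then show "(W has_vector_derivative F (W s)) (at s within {a..b})"
    by (rule has_vector_derivative_transform_within[where d=1]) (use s eq in auto)
qed

lemma lipschitz_ode_local_existence:
  fixes F :: "'a::banach \<Rightarrow> 'a"
  assumes lip: "L-lipschitz_on UNIV F" and h: "0 < h" "h * L \<le> 1/2"
  obtains W where "ode_solution (\<lambda>s. F) {0..h} W" "W 0 = x0"
proof -
  define P where "P f = Bcontfun (picard_step F x0 h f)" for f
  have P: "apply_bcontfun (P f) = picard_step F x0 h f" for f
    unfolding P_def using picard_step_bcontfun[OF lip] h by (simp add: Bcontfun_inverse)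
  have "\<exists>!f. P f = f"
  proof (rule banach_fix_type[of "1/2"])
    show "\<forall>f g. dist (P f) (P g) \<le> 1/2 * dist f g"
    proof (intro allI dist_bound)
      fix f g s
      have "dist (P f s) (P g s) \<le> h * L * dist f g"
        unfolding P using picard_step_contraction[OF lip] h by simp
      also have "\<dots> \<le> 1/2 * dist f g" using h by (intro mult_right_mono) auto
      finally show "dist (P f s) (P g s) \<le> 1/2 * dist f g" .
    qed
  qed auto
  then obtain f where f: "P f = f" by blast
  have eq: "f s = x0 + integral {0..s} (\<lambda>r. F (f r))" if "s \<in> {0..h}" for s
  proof -
    have "f s = P f s" by (simp add: f)
    also have "\<dots> = x0 + integral {0..s} (\<lambda>r. F (f r))" using that by (simp add: P picard_step_def)
    finally show ?thesis .
  qed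
  have "ode_solution (\<lambda>s. F) {0..h} f"
    by (rule ode_solution_of_integral_equation[OF lipschitz_on_continuous_on[OF lip] _ eq]) auto
  moreover have "f 0 = x0" using eq[of 0] h by simp
  ultimately show thesis by (rule that)
qed

lemma lipschitz_ode_existence_forward:
  fixes F :: "'a::banach \<Rightarrow> 'a"
  assumes lip: "L-lipschitz_on UNIV F" and h: "0 < h" "h * L \<le> 1/2"
  shows "\<exists>W. ode_solution (\<lambda>s. F) {0..real (Suc n) * h} W \<and> W 0 = x0"
proof (induction n arbitrary: x0)
  case 0
  show ?case using lipschitz_ode_local_existence[OF lip h] by auto
next
  case (Suc n)
  obtain W1 where W1: "ode_solution (\<lambda>s. F) {0..h} W1" "W1 0 = x0"
    using lipschitz_ode_local_existence[OF lip h] .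
  obtain W2 where W2: "ode_solution (\<lambda>s. F) {0..real (Suc n) * h} W2" "W2 0 = W1 h"
    using Suc.IH by blast
  have "ode_solution (\<lambda>s. F) {0 + h..real (Suc n) * h + h} (\<lambda>s. W2 (s - h))"
    using ode_solution_shift[OF W2(1)] .
  then have "ode_solution (\<lambda>s. F) {0..real (Suc (Suc n)) * h}
      (\<lambda>s. if s \<in> {0..h} then W1 s else W2 (s - h))"
    by (intro ode_solution_append[OF _ _ W1(1)]) (use h W2(2) in \<open>auto simp: algebra_simps\<close>)
  then show ?case using W1(2) h by fastforce
qed

lemma lipschitz_ode_existence:
  fixes F :: "'a::banach \<Rightarrow> 'a"
  assumes lip: "L-lipschitz_on UNIV F"
  obtains W where "ode_solution (\<lambda>s. F) {-T..T} W" "W 0 = x0"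
proof -
  define h where "h = 1 / (2 * L + 1)"
  have L: "0 \<le> L" using lipschitz_on_nonneg[OF lip] .
  then have h: "0 < h" "h * L \<le> 1/2" by (auto simp: h_def field_simps)
  obtain n where "T / h \<le> real n" using real_arch_simple by blast
  then have n: "T \<le> real (Suc n) * h" using h(1) by (auto simp: pos_divide_le_eq algebra_simps)
  have lip': "L-lipschitz_on UNIV (\<lambda>x. - F x)"
    using lip by (simp add: lipschitz_on_minus)
  obtain W where W: "ode_solution (\<lambda>s. F) {0..real (Suc n) * h} W" "W 0 = x0"
    using lipschitz_ode_existence_forward[OF lip h] by blast
  obtain V where V: "ode_solution (\<lambda>s x. - F x) {0..real (Suc n) * h} V" "V 0 = x0"
    using lipschitz_ode_existence_forward[OF lip' h] by blast
  have "ode_solution (\<lambda>s. F) {- (real (Suc n) * h)..- 0} (\<lambda>s. V (- s))"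
    using ode_solution_reflect[OF V(1)] by simp
  then have "ode_solution (\<lambda>s. F) {- (real (Suc n) * h)..real (Suc n) * h}
      (\<lambda>s. if s \<in> {- (real (Suc n) * h)..0} then V (- s) else W s)"
    by (intro ode_solution_append[OF _ _ _ W(1)]) (use h W(2) V(2) in auto)
  then have "ode_solution (\<lambda>s. F) {-T..T} (\<lambda>s. if s \<in> {- (real (Suc n) * h)..0} then V (- s) else W s)"
    by (rule ode_solution_subset) (use n in auto)
  then show thesis by (rule that) (use V(2) h in auto)
qed

lemma lipschitz_on_cball_extend:
  fixes X :: "'a::{real_inner,heine_borel} \<Rightarrow> 'b::metric_space"
  assumes lip: "L-lipschitz_on (cball 0 R) X" and "0 \<le> R"
  obtains Y where "L-lipschitz_on UNIV Y" "\<And>x. x \<in> cball 0 R \<Longrightarrow> Y x = X x"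
proof
  let ?P = "closest_point (cball (0::'a) R)"
  have ne: "cball (0::'a) R \<noteq> {}" using \<open>0 \<le> R\<close> by simp
  have "1-lipschitz_on UNIV ?P"
    using closest_point_lipschitz[OF convex_cball closed_cball ne] by (auto intro: lipschitz_onI)
  moreover have "L-lipschitz_on (?P ` UNIV) X"
    using closest_point_in_set[OF closed_cball ne] by (blast intro: lipschitz_on_subset[OF lip])
  ultimately show "L-lipschitz_on UNIV (\<lambda>x. X (?P x))"
    using lipschitz_on_compose2 by fastforce
  show "X (?P x) = X x" if "x \<in> cball 0 R" for x
    using that by (simp add: closest_point_self)
qed

section \<open>Time changes\<close>

lemma time_change_endpoint_lipschitz:
  fixes X :: "'a::euclidean_space \<Rightarrow> 'a"
  assumes lip: "L-lipschitz_on UNIV X" and g: "continuous_on {-T..T} g"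
    and u: "ode_solution (\<lambda>s. X) {-T..T} u" and v: "ode_solution (\<lambda>s x. g s *\<^sub>R X x) {-T..T} v"
    and a: "a \<in> {-T..T}" and b: "b \<in> {-T..T}" and "u a = v a"
    and int: "integral {-T..b} g - integral {-T..a} g = b - a"
  shows "u b = v b"
proof -
  let ?I = "{-T..T}"
  define G where "G s = integral {-T..s} g - integral {-T..a} g" for s
  have G': "(G has_real_derivative g s) (at s within ?I)" if "s \<in> ?I" for s
    unfolding G_def has_real_derivative_iff_has_vector_derivative
    by (auto intro!: derivative_eq_intros integral_has_vector_derivative[OF g that])
  have "continuous_on ?I G"
    unfolding G_def
    by (intro continuous_intros indefinite_integral_continuous_1 integrable_continuous_real g)
  then obtain C where C: "0 \<le> C" "\<And>s. s \<in> ?I \<Longrightarrow> \<bar>G s\<bar> \<le> C"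
    using continuous_on_compact_bound[OF compact_Icc] by (metis real_norm_def)
  obtain M where M: "\<And>s. s \<in> ?I \<Longrightarrow> \<bar>g s\<bar> \<le> M"
    using continuous_on_compact_bound[OF compact_Icc g] by (metis real_norm_def)
  define R where "R = C + 2 * T"
  have GR: "G s \<in> {-R..R}" if "s \<in> ?I" for s
    using C(2)[OF that] a by (auto simp: R_def abs_le_iff)
  obtain W where W: "ode_solution (\<lambda>s. X) {-R..R} W" "W 0 = u a"
    using lipschitz_ode_existence[OF lip] .
  have "u s = W (s - a)" if "s \<in> ?I" for s
  proof (rule ode_solution_unique[OF _ u _ a _ that])
    show "L-lipschitz_on UNIV X" for s by (rule lip)
    have "ode_solution (\<lambda>s. X) {-R + a..R + a} (\<lambda>s. W (s - a))"
      using ode_solution_shift[OF W(1)] .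
    then show "ode_solution (\<lambda>s. X) ?I (\<lambda>s. W (s - a))"
      by (rule ode_solution_subset) (use a C in \<open>auto simp: R_def\<close>)
  qed (use W(2) in simp)
  moreover have "v s = W (G s)" if "s \<in> ?I" for s
  proof (rule ode_solution_unique[OF _ v _ a _ that])
    show "(M * L)-lipschitz_on UNIV (\<lambda>x. g s *\<^sub>R X x)" if "s \<in> ?I" for s
      by (rule lipschitz_on_cmult_upper[OF lip M[OF that]])
    show "ode_solution (\<lambda>s x. g s *\<^sub>R X x) ?I (\<lambda>s. W (G s))"
      by (rule ode_solution_reparametrize[OF W(1) G']) (use GR in auto)
  qed (use W(2) \<open>u a = v a\<close> in \<open>simp add: G_def\<close>)
  ultimately show ?thesis using b int by (simp add: G_def)
qed

lemma time_change_endpoint: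
  fixes X :: "'a::euclidean_space \<Rightarrow> 'a"
  assumes loclip: "\<And>R. \<exists>L. L-lipschitz_on (cball 0 R) X" and g: "continuous_on {-T..T} g"
    and u: "ode_solution (\<lambda>s. X) {-T..T} u" and v: "ode_solution (\<lambda>s x. g s *\<^sub>R X x) {-T..T} v"
    and "a \<in> {-T..T}" "b \<in> {-T..T}" "u a = v a"
    and "integral {-T..b} g - integral {-T..a} g = b - a"
  shows "u b = v b"
proof -
  let ?I = "{-T..T}"
  obtain Ru where Ru: "0 \<le> Ru" "\<And>s. s \<in> ?I \<Longrightarrow> norm (u s) \<le> Ru"
    using continuous_on_compact_bound[OF compact_Icc ode_solution_continuous_on[OF u]] by metis
  obtain Rv where Rv: "\<And>s. s \<in> ?I \<Longrightarrow> norm (v s) \<le> Rv"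
    using continuous_on_compact_bound[OF compact_Icc ode_solution_continuous_on[OF v]] by metis
  define R where "R = max Ru Rv"
  have R: "u s \<in> cball 0 R" "v s \<in> cball 0 R" if "s \<in> ?I" for s
    using Ru(2)[OF that] Rv[OF that] by (auto simp: R_def)
  have "0 \<le> R" using Ru(1) by (simp add: R_def)
  obtain L where "L-lipschitz_on (cball 0 R) X" using loclip by blast
  then obtain Y where Y: "L-lipschitz_on UNIV Y" "\<And>x. x \<in> cball 0 R \<Longrightarrow> Y x = X x"
    using lipschitz_on_cball_extend \<open>0 \<le> R\<close> by blast
  show ?thesis
  proof (rule time_change_endpoint_lipschitz[OF Y(1) g])
    show "ode_solution (\<lambda>s. Y) ?I u" by (rule ode_solution_cong[OF u]) (simp add: Y(2)[OF R(1)])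
    show "ode_solution (\<lambda>s x. g s *\<^sub>R Y x) ?I v"
      by (rule ode_solution_cong[OF v]) (simp add: Y(2)[OF R(2)])
  qed (use assms in auto)
qed

section \<open>Odd coefficients and reflecting functions\<close>

lemma odd_cont_continuous_on: "odd_cont f \<Longrightarrow> continuous_on A f"
  unfolding odd_cont_def by (auto intro: continuous_on_subset)

lemma odd_cont_minus: "odd_cont f \<Longrightarrow> f (- s) = - f s"
  unfolding odd_cont_def by auto

lemma odd_cont_add: "odd_cont f \<Longrightarrow> odd_cont g \<Longrightarrow> odd_cont (\<lambda>t. f t + g t)"
  unfolding odd_cont_def by (auto intro: continuous_intros)

lemma odd_cont_diff: "odd_cont f \<Longrightarrow> odd_cont g \<Longrightarrow> odd_cont (\<lambda>t. f t - g t)"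
  unfolding odd_cont_def by (auto intro: continuous_intros)

lemma odd_cont_cmult: "odd_cont f \<Longrightarrow> odd_cont (\<lambda>t. c * f t)"
  unfolding odd_cont_def by (auto intro: continuous_intros)

lemma integral_odd_reflect:
  fixes \<beta> :: "real \<Rightarrow> real"
  assumes cont: "continuous_on {-T..T} \<beta>" and odd: "\<And>s. \<beta> (- s) = - \<beta> s" and x: "x \<in> {-T..T}"
  shows "integral {-T..-x} \<beta> = integral {-T..x} \<beta>"
proof -
  let ?I = "{-T..T}"
  define B where "B y = integral {-T..y} \<beta>" for y
  have B': "(B has_vector_derivative \<beta> y) (at y within ?I)" if "y \<in> ?I" for y
    unfolding B_def by (rule integral_has_vector_derivative[OF cont that])
  have "\<exists>c. \<forall>y\<in>?I. B y - B (- y) = c"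
  proof (rule has_derivative_zero_constant)
    fix y assume y: "y \<in> ?I"
    have "(uminus has_vector_derivative - 1) (at y within ?I)"
      by (auto intro!: derivative_eq_intros)
    moreover have "(B has_vector_derivative \<beta> (- y)) (at (- y) within uminus ` ?I)"
      using B'[of "- y"] y by (simp add: image_uminus_atLeastAtMost)
    ultimately have "((\<lambda>y. B (- y)) has_vector_derivative (- 1) *\<^sub>R \<beta> (- y)) (at y within ?I)"
      using vector_diff_chain_within unfolding o_def by blast
    from has_vector_derivative_diff[OF B'[OF y] this]
    show "((\<lambda>y. B y - B (- y)) has_derivative (\<lambda>h. 0)) (at y within ?I)"
      by (simp add: has_vector_derivative_def odd)
  qed auto
  then obtain c where "\<forall>y\<in>?I. B y - B (- y) = c" by blast
  moreover have "0 \<in> ?I" using x by auto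
  ultimately have "B x - B (- x) = B 0 - B (- 0)" using x by metis
  then show ?thesis by (simp add: B_def)
qed

lemma integral_one_plus_odd:
  fixes \<beta> :: "real \<Rightarrow> real"
  assumes cont: "continuous_on {-T..T} \<beta>" and odd: "\<And>s. \<beta> (- s) = - \<beta> s" and x: "x \<in> {-T..T}"
  shows "integral {-T..-x} (\<lambda>s. 1 + \<beta> s) - integral {-T..x} (\<lambda>s. 1 + \<beta> s) = - x - x"
proof -
  have "integral {-T..y} (\<lambda>s. 1 + \<beta> s) = (y + T) + integral {-T..y} \<beta>" if "y \<in> {-T..T}" for y
  proof -
    have "\<beta> integrable_on {-T..y}"
      using that by (intro integrable_continuous_real continuous_on_subset[OF cont]) auto
    from integral_add[OF integrable_const_ivl this] show ?thesis using that by simp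
  qed
  then show ?thesis using x integral_odd_reflect[OF cont odd x] by simp
qed

lemma mrf_graphD:
  assumes "mrf_graph X t p q"
  obtains u where "ode_solution X {-\<bar>t\<bar>..\<bar>t\<bar>} u" "u t = p" "u (- t) = q"
proof -
  have seg: "closed_segment (- t) t = {-\<bar>t\<bar>..\<bar>t\<bar>}" by (auto simp: closed_segment_eq_real_ivl)
  from assms obtain u where "is_solution_on X (closed_segment (- t) t) u" "u t = p" "u (- t) = q"
    unfolding mrf_graph_def by blast
  then show thesis by (intro that[of u]) (simp_all add: is_solution_on_def ode_solution_def seg)
qed

lemma same_mrfI:
  assumes "\<And>T t u v. t \<in> {-T..T} \<Longrightarrow> ode_solution X {-T..T} u \<Longrightarrow> ode_solution Y {-T..T} v \<Longrightarrow>
      u t = v t \<Longrightarrow> u (- t) = v (- t)"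
  shows "same_mrf X Y"
  unfolding same_mrf_def
proof (intro allI impI)
  fix t p q r assume "mrf_graph X t p q \<and> mrf_graph Y t p r"
  then have X: "mrf_graph X t p q" and Y: "mrf_graph Y t p r" by simp_all
  obtain u where u: "ode_solution X {-\<bar>t\<bar>..\<bar>t\<bar>} u" "u t = p" "u (- t) = q"
    by (rule mrf_graphD[OF X])
  obtain v where v: "ode_solution Y {-\<bar>t\<bar>..\<bar>t\<bar>} v" "v t = p" "v (- t) = r"
    by (rule mrf_graphD[OF Y])
  have "u (- t) = v (- t)" by (rule assms[OF _ u(1) v(1)]) (auto simp: u(2) v(2))
  then show "q = r" by (simp only: u(3) v(3))
qed

lemma same_mrf_odd_time_change:
  fixes X :: "real \<times> real \<times> real \<Rightarrow> real \<times> real \<times> real"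
  assumes loclip: "\<And>R. \<exists>L. L-lipschitz_on (cball 0 R) X" and \<alpha>: "odd_cont \<alpha>"
  shows "same_mrf (\<lambda>t. X) (\<lambda>t p. (1 + \<alpha> t) *\<^sub>R X p)"
proof (rule same_mrfI)
  fix T t u v
  assume t: "t \<in> {-T..T}" and u: "ode_solution (\<lambda>t. X) {-T..T} u"
    and v: "ode_solution (\<lambda>t p. (1 + \<alpha> t) *\<^sub>R X p) {-T..T} v" and "u t = v t"
  have "continuous_on {-T..T} (\<lambda>s. 1 + \<alpha> s)"
    by (intro continuous_intros odd_cont_continuous_on[OF \<alpha>])
  moreover have "integral {-T..- t} (\<lambda>s. 1 + \<alpha> s) - integral {-T..t} (\<lambda>s. 1 + \<alpha> s) = - t - t"
    by (rule integral_one_plus_odd[OF odd_cont_continuous_on[OF \<alpha>] odd_cont_minus[OF \<alpha>] t])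
  moreover have "- t \<in> {-T..T}" using t by auto
  ultimately show "u (- t) = v (- t)"
    using time_change_endpoint[OF loclip _ u v t] \<open>u t = v t\<close> by blast
qed

section \<open>Rotations about the z-axis\<close>

fun rot_z :: "real \<Rightarrow> real \<times> real \<times> real \<Rightarrow> real \<times> real \<times> real"
  where "rot_z \<theta> (x, y, z) = (x * cos \<theta> - y * sin \<theta>, x * sin \<theta> + y * cos \<theta>, z)"

(* The derivative of rot_z \<theta> p with respect to \<theta> is - rot_z \<theta> (rot_z_field p). *)
fun rot_z_field :: "real \<times> real \<times> real \<Rightarrow> real \<times> real \<times> real"
  where "rot_z_field (x, y, z) = (y, - x, 0)"

lemma rot_z_0 [simp]: "rot_z 0 p = p"
  by (cases p) simp

lemma rot_z_minus_cancel [simp]: "rot_z (- \<theta>) (rot_z \<theta> p) = p"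
proof (cases p)
  case (fields x y z)
  have "(x * cos \<theta> - y * sin \<theta>) * cos \<theta> + (x * sin \<theta> + y * cos \<theta>) * sin \<theta> = x * ((sin \<theta>)\<^sup>2 + (cos \<theta>)\<^sup>2)"
    "(x * sin \<theta> + y * cos \<theta>) * cos \<theta> - (x * cos \<theta> - y * sin \<theta>) * sin \<theta> = y * ((sin \<theta>)\<^sup>2 + (cos \<theta>)\<^sup>2)"
    by algebra+
  then show ?thesis by (simp add: fields)
qed

lemma rot_z_scaleR: "rot_z \<theta> (c *\<^sub>R p) = c *\<^sub>R rot_z \<theta> p"
  by (cases p) (simp add: algebra_simps)

lemma rot_z_planar_norm:
  "(fst (rot_z \<theta> p))\<^sup>2 + (fst (snd (rot_z \<theta> p)))\<^sup>2 = (fst p)\<^sup>2 + (fst (snd p))\<^sup>2"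
proof (cases p)
  case (fields x y z)
  have "(x * cos \<theta> - y * sin \<theta>)\<^sup>2 + (x * sin \<theta> + y * cos \<theta>)\<^sup>2 = (x\<^sup>2 + y\<^sup>2) * ((sin \<theta>)\<^sup>2 + (cos \<theta>)\<^sup>2)"
    by algebra
  then show ?thesis by (simp add: fields)
qed

definition rot_z_equivariant :: "(real \<times> real \<times> real \<Rightarrow> real \<times> real \<times> real) \<Rightarrow> bool"
  where "rot_z_equivariant X \<longleftrightarrow> (\<forall>\<theta> p. X (rot_z \<theta> p) = rot_z \<theta> (X p))"

lemma has_vector_derivative_triple_iff:
  fixes v :: "real \<Rightarrow> real \<times> real \<times> real"
  shows "(v has_vector_derivative (D1, D2, D3)) (at s within I) \<longleftrightarrow>
    ((\<lambda>r. fst (v r)) has_real_derivative D1) (at s within I) \<and>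
    ((\<lambda>r. fst (snd (v r))) has_real_derivative D2) (at s within I) \<and>
    ((\<lambda>r. snd (snd (v r))) has_real_derivative D3) (at s within I)"
  unfolding has_real_derivative_iff_has_vector_derivative
proof
  assume d: "(v has_vector_derivative (D1, D2, D3)) (at s within I)"
  have "bounded_linear (\<lambda>p::real \<times> real \<times> real. fst (snd p))"
    "bounded_linear (\<lambda>p::real \<times> real \<times> real. snd (snd p))"
    by (auto intro: bounded_linear_compose[OF _ bounded_linear_snd] bounded_linear_fst bounded_linear_snd)
  with bounded_linear.has_vector_derivative[OF _ d] bounded_linear_fst
  show "((\<lambda>r. fst (v r)) has_vector_derivative D1) (at s within I) \<and>
    ((\<lambda>r. fst (snd (v r))) has_vector_derivative D2) (at s within I) \<and>
    ((\<lambda>r. snd (snd (v r))) has_vector_derivative D3) (at s within I)"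
    by fastforce
next
  assume "((\<lambda>r. fst (v r)) has_vector_derivative D1) (at s within I) \<and>
    ((\<lambda>r. fst (snd (v r))) has_vector_derivative D2) (at s within I) \<and>
    ((\<lambda>r. snd (snd (v r))) has_vector_derivative D3) (at s within I)"
  then have "((\<lambda>r. (fst (v r), fst (snd (v r)), snd (snd (v r)))) has_vector_derivative (D1, D2, D3))
      (at s within I)"
    by (intro has_vector_derivative_Pair) auto
  then show "(v has_vector_derivative (D1, D2, D3)) (at s within I)" by simp
qed

lemma has_vector_derivative_rot_z:
  assumes D: "(D has_real_derivative k) (at s within I)"
    and v: "(v has_vector_derivative v') (at s within I)"
  shows "((\<lambda>s. rot_z (D s) (v s)) has_vector_derivative rot_z (D s) (v' - k *\<^sub>R rot_z_field (v s)))
    (at s within I)"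
proof -
  obtain x y z where vs: "v s = (x, y, z)" by (cases "v s")
  obtain x' y' z' where v': "v' = (x', y', z')" by (cases v')
  have c: "((\<lambda>s. fst (v s)) has_real_derivative x') (at s within I)"
    "((\<lambda>s. fst (snd (v s))) has_real_derivative y') (at s within I)"
    "((\<lambda>s. snd (snd (v s))) has_real_derivative z') (at s within I)"
    using v unfolding v' has_vector_derivative_triple_iff by auto
  have rot: "(\<lambda>s. rot_z (D s) (v s)) = (\<lambda>s. (fst (v s) * cos (D s) - fst (snd (v s)) * sin (D s),
      fst (v s) * sin (D s) + fst (snd (v s)) * cos (D s), snd (snd (v s))))"
  proof
    fix s show "rot_z (D s) (v s) = (fst (v s) * cos (D s) - fst (snd (v s)) * sin (D s),
      fst (v s) * sin (D s) + fst (snd (v s)) * cos (D s), snd (snd (v s)))"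
      by (cases "v s") simp
  qed
  have "((\<lambda>s. fst (v s) * cos (D s) - fst (snd (v s)) * sin (D s)) has_real_derivative
      x' * cos (D s) - x * (sin (D s) * k) - (y' * sin (D s) + y * (cos (D s) * k))) (at s within I)"
    "((\<lambda>s. fst (v s) * sin (D s) + fst (snd (v s)) * cos (D s)) has_real_derivative
      x' * sin (D s) + x * (cos (D s) * k) + (y' * cos (D s) - y * (sin (D s) * k))) (at s within I)"
    by (auto intro!: derivative_eq_intros c D simp: vs)
  moreover have "rot_z (D s) (v' - k *\<^sub>R rot_z_field (v s)) =
      (x' * cos (D s) - x * (sin (D s) * k) - (y' * sin (D s) + y * (cos (D s) * k)),
       x' * sin (D s) + x * (cos (D s) * k) + (y' * cos (D s) - y * (sin (D s) * k)), z')"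
    by (simp add: vs v' algebra_simps)
  ultimately show ?thesis
    unfolding rot by (simp add: has_vector_derivative_triple_iff c(3))
qed

lemma ode_solution_derotate:
  assumes X: "rot_z_equivariant X"
    and v: "ode_solution (\<lambda>s p. g s *\<^sub>R X p + k s *\<^sub>R rot_z_field p) I v"
    and D: "\<And>s. s \<in> I \<Longrightarrow> (D has_real_derivative k s) (at s within I)"
  shows "ode_solution (\<lambda>s p. g s *\<^sub>R X p) I (\<lambda>s. rot_z (D s) (v s))"
  unfolding ode_solution_def
proof
  fix s assume s: "s \<in> I"
  have "g s *\<^sub>R X (v s) + k s *\<^sub>R rot_z_field (v s) - k s *\<^sub>R rot_z_field (v s) = g s *\<^sub>R X (v s)"
    by (rule add_diff_cancel)
  moreover have "rot_z (D s) (g s *\<^sub>R X (v s)) = g s *\<^sub>R X (rot_z (D s) (v s))"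
    using X unfolding rot_z_equivariant_def rot_z_scaleR by metis
  ultimately show "((\<lambda>s. rot_z (D s) (v s)) has_vector_derivative g s *\<^sub>R X (rot_z (D s) (v s)))
      (at s within I)"
    using has_vector_derivative_rot_z[OF D[OF s] ode_solutionD[OF v s]] by (simp only:)
qed

lemma rotating_time_change_reflection:
  fixes X :: "real \<times> real \<times> real \<Rightarrow> real \<times> real \<times> real"
  assumes X: "rot_z_equivariant X" and loclip: "\<And>R. \<exists>L. L-lipschitz_on (cball 0 R) X"
    and v: "ode_solution (\<lambda>s p. g s *\<^sub>R X p + k s *\<^sub>R rot_z_field p) {-T..T} v"
    and u: "ode_solution (\<lambda>s. X) {-T..T} u"
    and g: "continuous_on {-T..T} g" and k: "continuous_on {-T..T} k" and t: "t \<in> {-T..T}"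
    and g_int: "integral {-T..-t} g - integral {-T..t} g = - t - t"
    and k_int: "integral {-T..t} k = integral {-T..-t} k"
    and "u t = v t"
  shows "u (- t) = v (- t)"
proof -
  let ?I = "{-T..T}"
  define D where "D s = integral {-T..s} k" for s
  have "(D has_real_derivative k s) (at s within ?I)" if "s \<in> ?I" for s
    unfolding D_def has_real_derivative_iff_has_vector_derivative
    by (rule integral_has_vector_derivative[OF k that])
  from ode_solution_derotate[OF X v this]
  have w: "ode_solution (\<lambda>s p. g s *\<^sub>R X p) ?I (\<lambda>s. rot_z (D s) (v s))" .
  have "ode_solution (\<lambda>s p. 1 *\<^sub>R X p + 0 *\<^sub>R rot_z_field p) ?I u"
    by (rule ode_solution_cong[OF u]) simp
  from ode_solution_derotate[OF X this DERIV_const]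
  have "ode_solution (\<lambda>s. X) ?I (\<lambda>s. rot_z (D t) (u s))" by simp
  from time_change_endpoint[OF loclip g this w t _ _ g_int]
  have "rot_z (D t) (u (- t)) = rot_z (D (- t)) (v (- t))" using t \<open>u t = v t\<close> by simp
  moreover have "D (- t) = D t" using k_int by (simp add: D_def)
  ultimately show ?thesis by (metis rot_z_minus_cancel)
qed

lemma odd_rotating_time_change_reflection:
  fixes X :: "real \<times> real \<times> real \<Rightarrow> real \<times> real \<times> real"
  assumes X: "rot_z_equivariant X" and loclip: "\<And>R. \<exists>L. L-lipschitz_on (cball 0 R) X"
    and \<beta>: "odd_cont \<beta>" and \<kappa>: "odd_cont \<kappa>"
    and v: "ode_solution (\<lambda>s p. (1 + \<beta> s) *\<^sub>R X p + \<kappa> s *\<^sub>R rot_z_field p) {-T..T} v"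
    and u: "ode_solution (\<lambda>s. X) {-T..T} u" and t: "t \<in> {-T..T}" and "u t = v t"
  shows "u (- t) = v (- t)"
proof (rule rotating_time_change_reflection[OF X loclip v u _ _ t])
  show "continuous_on {-T..T} (\<lambda>s. 1 + \<beta> s)"
    by (intro continuous_intros odd_cont_continuous_on[OF \<beta>])
  show "continuous_on {-T..T} \<kappa>" by (rule odd_cont_continuous_on[OF \<kappa>])
  show "integral {-T..- t} (\<lambda>s. 1 + \<beta> s) - integral {-T..t} (\<lambda>s. 1 + \<beta> s) = - t - t"
    by (rule integral_one_plus_odd[OF odd_cont_continuous_on[OF \<beta>] odd_cont_minus[OF \<beta>] t])
  show "integral {-T..t} \<kappa> = integral {-T..- t} \<kappa>"
    by (rule integral_odd_reflect[OF odd_cont_continuous_on[OF \<kappa>] odd_cont_minus[OF \<kappa>] t, symmetric])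
qed fact

lemma same_mrf_odd_rotating_time_change:
  fixes X :: "real \<times> real \<times> real \<Rightarrow> real \<times> real \<times> real"
  assumes "rot_z_equivariant X" "\<And>R. \<exists>L. L-lipschitz_on (cball 0 R) X" "odd_cont \<beta>" "odd_cont \<kappa>"
  shows "same_mrf (\<lambda>t. X) (\<lambda>t p. (1 + \<beta> t) *\<^sub>R X p + \<kappa> t *\<^sub>R rot_z_field p)"
  using odd_rotating_time_change_reflection[OF assms] by (rule same_mrfI)

section \<open>Quadratic forms on the rotating plane\<close>

fun planar_form :: "real \<Rightarrow> real \<Rightarrow> real \<Rightarrow> real \<times> real \<times> real \<Rightarrow> real"
  where "planar_form A3 A4 A5 (x, y, z) = x\<^sup>2 * A3 + x * y * A4 + y\<^sup>2 * A5"

lemma planar_form_eq: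
  "planar_form A3 A4 A5 p = (fst p)\<^sup>2 * A3 + fst p * fst (snd p) * A4 + (fst (snd p))\<^sup>2 * A5"
  by (cases p) simp

(* If r has no planar part then neither has p; both sides vanish, the right one since x / 0 = 0. *)
lemma planar_form_homogeneous:
  assumes "fst p = l * fst r" "fst (snd p) = l * fst (snd r)"
  shows "G * planar_form A3 A4 A5 p
    = ((fst p)\<^sup>2 + (fst (snd p))\<^sup>2) * G / ((fst r)\<^sup>2 + (fst (snd r))\<^sup>2) * planar_form A3 A4 A5 r"
proof (cases "(fst r)\<^sup>2 + (fst (snd r))\<^sup>2 = 0")
  case True
  then have "fst r = 0" "fst (snd r) = 0" by (auto simp: add_nonneg_eq_0_iff)
  then show ?thesis using assms by (cases p, cases r) simp
next
  case False
  then show ?thesis using assms by (cases p, cases r) (simp add: field_simps power2_eq_square)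
qed

lemma rotation_quadratic_derivative_bound:
  fixes r1 r2 :: real
  assumes A: "\<bar>A3\<bar> \<le> M" "\<bar>A4\<bar> \<le> M" "\<bar>A5\<bar> \<le> M"
  shows "\<bar>2 * r1 * r2 * (A5 - A3) + (r1\<^sup>2 - r2\<^sup>2) * A4\<bar> \<le> 3 * M * (r1\<^sup>2 + r2\<^sup>2)"
proof -
  have "\<bar>2 * r1 * r2\<bar> \<le> r1\<^sup>2 + r2\<^sup>2"
    using sum_squares_bound[of "\<bar>r1\<bar>" "\<bar>r2\<bar>"] by (simp add: abs_mult)
  moreover have "\<bar>r1\<^sup>2 - r2\<^sup>2\<bar> \<le> r1\<^sup>2 + r2\<^sup>2"
    unfolding abs_le_iff by simp
  moreover have "\<bar>A5 - A3\<bar> \<le> 2 * M" using A by linarith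
  ultimately have "\<bar>2 * r1 * r2\<bar> * \<bar>A5 - A3\<bar> + \<bar>r1\<^sup>2 - r2\<^sup>2\<bar> * \<bar>A4\<bar>
      \<le> (r1\<^sup>2 + r2\<^sup>2) * (2 * M) + (r1\<^sup>2 + r2\<^sup>2) * M"
    using A by (intro add_mono mult_mono) auto
  moreover have "\<bar>2 * r1 * r2 * (A5 - A3) + (r1\<^sup>2 - r2\<^sup>2) * A4\<bar>
      \<le> \<bar>2 * r1 * r2\<bar> * \<bar>A5 - A3\<bar> + \<bar>r1\<^sup>2 - r2\<^sup>2\<bar> * \<bar>A4\<bar>"
    unfolding abs_mult[symmetric] by (rule abs_triangle_ineq)
  ultimately show ?thesis by (simp add: algebra_simps)
qed

lemma planar_form_rot_z_lipschitz:
  assumes A: "\<bar>A3\<bar> \<le> M" "\<bar>A4\<bar> \<le> M" "\<bar>A5\<bar> \<le> M"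
  shows "(3 * M * ((fst e)\<^sup>2 + (fst (snd e))\<^sup>2))-lipschitz_on UNIV
    (\<lambda>\<theta>. planar_form A3 A4 A5 (rot_z \<theta> e))"
proof -
  obtain e1 e2 e3 where e: "e = (e1, e2, e3)" by (cases e)
  define r1 where "r1 \<theta> = e1 * cos \<theta> - e2 * sin \<theta>" for \<theta>
  define r2 where "r2 \<theta> = e1 * sin \<theta> + e2 * cos \<theta>" for \<theta>
  have n: "(r1 \<theta>)\<^sup>2 + (r2 \<theta>)\<^sup>2 = e1\<^sup>2 + e2\<^sup>2" for \<theta>
    using rot_z_planar_norm[of \<theta> e] by (simp add: e r1_def r2_def)
  have f: "planar_form A3 A4 A5 (rot_z \<theta> e) = (r1 \<theta>)\<^sup>2 * A3 + r1 \<theta> * r2 \<theta> * A4 + (r2 \<theta>)\<^sup>2 * A5" for \<theta>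
    by (simp add: e r1_def r2_def)
  have r': "(r1 has_real_derivative - r2 \<theta>) (at \<theta>)" "(r2 has_real_derivative r1 \<theta>) (at \<theta>)" for \<theta>
    unfolding r1_def[abs_def] r2_def[abs_def] by (auto intro!: derivative_eq_intros simp: algebra_simps)
  have "((\<lambda>\<theta>. planar_form A3 A4 A5 (rot_z \<theta> e)) has_field_derivative
      2 * r1 \<theta> * r2 \<theta> * (A5 - A3) + ((r1 \<theta>)\<^sup>2 - (r2 \<theta>)\<^sup>2) * A4) (at \<theta> within UNIV)" for \<theta>
    unfolding f by (rule derivative_eq_intros r' refl | simp add: power2_eq_square algebra_simps)+
  moreover have "norm (2 * r1 \<theta> * r2 \<theta> * (A5 - A3) + ((r1 \<theta>)\<^sup>2 - (r2 \<theta>)\<^sup>2) * A4)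
      \<le> 3 * M * (e1\<^sup>2 + e2\<^sup>2)" for \<theta>
    using rotation_quadratic_derivative_bound[OF A, of "r1 \<theta>" "r2 \<theta>"] by (simp add: n)
  ultimately have "norm (planar_form A3 A4 A5 (rot_z x e) - planar_form A3 A4 A5 (rot_z y e))
      \<le> 3 * M * (e1\<^sup>2 + e2\<^sup>2) * norm (x - y)" for x y
    by (intro field_differentiable_bound[of UNIV]) auto
  moreover have "0 \<le> M" using A by linarith
  ultimately show ?thesis by (intro lipschitz_onI) (auto simp: e dist_norm)
qed

lemma planar_form_rot_z_uniformly_lipschitz:
  fixes A3 A4 A5 b :: "real \<Rightarrow> real"
  assumes "continuous_on {-T..T} A3" "continuous_on {-T..T} A4" "continuous_on {-T..T} A5"
  obtains L where "\<And>s. s \<in> {-T..T} \<Longrightarrow>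
    L-lipschitz_on UNIV (\<lambda>d. b s + c * planar_form (A3 s) (A4 s) (A5 s) (rot_z (- d) e))"
proof -
  obtain M3 M4 M5 where M: "\<And>s. s \<in> {-T..T} \<Longrightarrow> \<bar>A3 s\<bar> \<le> M3 \<and> \<bar>A4 s\<bar> \<le> M4 \<and> \<bar>A5 s\<bar> \<le> M5"
    using continuous_on_compact_bound[OF compact_Icc assms(1)]
      continuous_on_compact_bound[OF compact_Icc assms(2)]
      continuous_on_compact_bound[OF compact_Icc assms(3)]
    by (metis real_norm_def)
  define M where "M = max M3 (max M4 M5)"
  show thesis
  proof (rule that)
    fix s assume "s \<in> {-T..T}"
    from M[OF this] have "\<bar>A3 s\<bar> \<le> M" "\<bar>A4 s\<bar> \<le> M" "\<bar>A5 s\<bar> \<le> M"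
      by (auto simp: M_def le_max_iff_disj)
    from planar_form_rot_z_lipschitz[OF this, of e]
    have "(3 * M * ((fst e)\<^sup>2 + (fst (snd e))\<^sup>2) * 1)-lipschitz_on UNIV
        (\<lambda>d. planar_form (A3 s) (A4 s) (A5 s) (rot_z (- d) e))"
      by (intro lipschitz_on_compose2[OF lipschitz_on_minus[OF lipschitz_on_id]])
        (auto intro: lipschitz_on_subset)
    from lipschitz_on_add[OF lipschitz_on_constant lipschitz_on_cmult_real[OF this, of c]]
    show "(0 + \<bar>c\<bar> * (3 * M * ((fst e)\<^sup>2 + (fst (snd e))\<^sup>2) * 1))-lipschitz_on UNIV
        (\<lambda>d. b s + c * planar_form (A3 s) (A4 s) (A5 s) (rot_z (- d) e))" .
  qed
qed

section \<open>The Langford field\<close>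

lemma quadratic_map_lipschitz_on_cball:
  fixes A :: "'a::real_normed_vector \<Rightarrow> 'b::real_normed_vector" and B :: "'a \<Rightarrow> 'a \<Rightarrow> 'b"
  assumes A: "bounded_linear A" and B: "bounded_bilinear B"
  shows "\<exists>L. L-lipschitz_on (cball 0 R) (\<lambda>p. A p + B p p)"
proof -
  obtain KA where KA: "0 < KA" "\<And>x. norm (A x) \<le> norm x * KA"
    using bounded_linear.pos_bounded[OF A] by blast
  obtain KB where KB: "0 < KB" "\<And>x y. norm (B x y) \<le> norm x * norm y * KB"
    using bounded_bilinear.pos_bounded[OF B] by blast
  have "(KA + 2 * KB * \<bar>R\<bar>)-lipschitz_on (cball 0 R) (\<lambda>p. A p + B p p)"
  proof (rule lipschitz_onI)
    fix p q :: 'a assume "p \<in> cball 0 R" "q \<in> cball 0 R"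
    then have p: "norm p \<le> \<bar>R\<bar>" and q: "norm q \<le> \<bar>R\<bar>" by auto
    have "A p + B p p - (A q + B q q) = A (p - q) + B p (p - q) + B (p - q) q"
      by (simp add: linear_diff[OF bounded_linear.linear[OF A]] bounded_bilinear.diff_left[OF B]
          bounded_bilinear.diff_right[OF B] algebra_simps)
    then have "norm (A p + B p p - (A q + B q q))
        \<le> norm (p - q) * KA + norm p * norm (p - q) * KB + norm (p - q) * norm q * KB"
      by (metis KA(2) KB(2) add_mono norm_triangle_le)
    also have "\<dots> \<le> norm (p - q) * KA + \<bar>R\<bar> * norm (p - q) * KB + norm (p - q) * \<bar>R\<bar> * KB"
      using p q KB(1) by (intro add_mono mult_right_mono mult_left_mono) auto
    finally show "dist (A p + B p p) (A q + B q q) \<le> (KA + 2 * KB * \<bar>R\<bar>) * dist p q"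
      by (simp add: dist_norm algebra_simps)
  qed (use KA KB in auto)
  then show ?thesis by blast
qed

lemma langford_locally_lipschitz: "\<exists>L. L-lipschitz_on (cball 0 R) (langford a b c d e t)"
proof -
  define A where "A p = (a * fst p + b * fst (snd p), c * fst p + d * fst (snd p), e * snd (snd p))"
    for p :: "real \<times> real \<times> real"
  define B where "B p q = (fst p * snd (snd q), fst (snd p) * snd (snd q), - inner p q)"
    for p q :: "real \<times> real \<times> real"
  have "linear A" unfolding A_def linear_iff by (simp add: algebra_simps)
  moreover have "bilinear B"
    unfolding B_def bilinear_def linear_iff by (simp add: algebra_simps inner_add_left inner_add_right)
  ultimately have "\<exists>L. L-lipschitz_on (cball 0 R) (\<lambda>p. A p + B p p)"
    by (simp add: quadratic_map_lipschitz_on_cball linear_conv_bounded_linear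
        bilinear_conv_bounded_bilinear)
  moreover have "langford a b c d e t = (\<lambda>p. A p + B p p)"
    by (auto simp: langford_def A_def B_def fun_eq_iff power2_eq_square algebra_simps)
  ultimately show ?thesis by simp
qed

lemma langford_rot_z_equivariant: "rot_z_equivariant (langford a b (- b) a e t)"
  unfolding rot_z_equivariant_def
proof (intro allI)
  fix \<theta> p
  show "langford a b (- b) a e t (rot_z \<theta> p) = rot_z \<theta> (langford a b (- b) a e t p)"
    using rot_z_planar_norm[of \<theta> p] by (cases p) (simp add: langford_def algebra_simps)
qed

fun langford_factor :: "real \<Rightarrow> real \<times> real \<times> real \<Rightarrow> real"
  where "langford_factor a (x, y, z) = 4 * a * z + x\<^sup>2 + y\<^sup>2 + 2 * z\<^sup>2"

fun langford_invariant :: "real \<Rightarrow> real \<times> real \<times> real \<Rightarrow> real"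
  where "langford_invariant a (x, y, z) = (x\<^sup>2 + y\<^sup>2) * langford_factor a (x, y, z)"

lemma langford_factor_eq:
  "langford_factor a p = 4 * a * snd (snd p) + (fst p)\<^sup>2 + (fst (snd p))\<^sup>2 + 2 * (snd (snd p))\<^sup>2"
  by (cases p) simp

lemma langford_invariant_eq:
  "langford_invariant a p = ((fst p)\<^sup>2 + (fst (snd p))\<^sup>2) * langford_factor a p"
  by (cases p) simp

lemma langford_invariant_const:
  assumes v: "ode_solution (\<lambda>s p. g s *\<^sub>R langford a b (-b) a (-2*a) 0 p + k s *\<^sub>R rot_z_field p) I v"
    and "convex I" "s \<in> I" "s0 \<in> I"
  shows "langford_invariant a (v s) = langford_invariant a (v s0)"
proof -
  have "\<exists>c. \<forall>s\<in>I. langford_invariant a (v s) = c"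
  proof (rule has_derivative_zero_constant[OF \<open>convex I\<close>])
    fix s assume s: "s \<in> I"
    obtain x y z where vs: "v s = (x, y, z)" by (cases "v s")
    have "(v has_vector_derivative (g s * (a*x + b*y + x*z) + k s * y, g s * (-b*x + a*y + y*z) - k s * x,
        g s * (-2*a*z - (x\<^sup>2 + y\<^sup>2 + z\<^sup>2)))) (at s within I)"
      using ode_solutionD[OF v s] by (simp add: vs langford_def)
    then have c: "((\<lambda>s. fst (v s)) has_real_derivative g s * (a*x + b*y + x*z) + k s * y) (at s within I)"
      "((\<lambda>s. fst (snd (v s))) has_real_derivative g s * (-b*x + a*y + y*z) - k s * x) (at s within I)"
      "((\<lambda>s. snd (snd (v s))) has_real_derivative g s * (-2*a*z - (x\<^sup>2 + y\<^sup>2 + z\<^sup>2))) (at s within I)"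
      unfolding has_vector_derivative_triple_iff by auto
    have "((\<lambda>s. langford_invariant a (v s)) has_real_derivative 0) (at s within I)"
      unfolding langford_invariant_eq langford_factor_eq
      by (rule derivative_eq_intros c refl | simp add: vs power2_eq_square algebra_simps)+
    then show "((\<lambda>s. langford_invariant a (v s)) has_derivative (\<lambda>h. 0)) (at s within I)"
      by (simp only: has_field_derivative_def lambda_zero)
  qed
  then obtain c where "\<forall>s\<in>I. langford_invariant a (v s) = c" by blast
  then show ?thesis using assms(3,4) by simp
qed

lemma langford_planar_scaling:
  assumes w: "ode_solution (\<lambda>s p. g s *\<^sub>R langford a 0 0 a e 0 p) {-T..T} w"
    and g: "continuous_on {-T..T} g" and s0: "s0 \<in> {-T..T}"
  obtains l where "\<And>s. s \<in> {-T..T} \<Longrightarrow>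
    fst (w s) = l s * fst (w s0) \<and> fst (snd (w s)) = l s * fst (snd (w s0))"
proof -
  let ?I = "{-T..T}"
  define m where "m s = g s * (a + snd (snd (w s)))" for s
  define M where "M s = integral {-T..s} m" for s
  have "continuous_on ?I m"
    unfolding m_def using ode_solution_continuous_on[OF w] g by (intro continuous_intros)
  then have M: "(M has_real_derivative m s) (at s within ?I)" if "s \<in> ?I" for s
    unfolding M_def has_real_derivative_iff_has_vector_derivative
    by (rule integral_has_vector_derivative[OF _ that])
  have "((\<lambda>s. fst (w s)) has_real_derivative m s * fst (w s)) (at s within ?I) \<and>
      ((\<lambda>s. fst (snd (w s))) has_real_derivative m s * fst (snd (w s))) (at s within ?I)" if "s \<in> ?I" for s
  proof -
    obtain x y z where ws: "w s = (x, y, z)" by (cases "w s")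
    have "(w has_vector_derivative (m s * x, m s * y, g s * (e * z - (x\<^sup>2 + y\<^sup>2 + z\<^sup>2)))) (at s within ?I)"
      using ode_solutionD[OF w that] by (simp add: ws m_def langford_def algebra_simps)
    then show ?thesis unfolding has_vector_derivative_triple_iff by (simp add: ws)
  qed
  then have "fst (w s) = exp (M s - M s0) * fst (w s0) \<and>
      fst (snd (w s)) = exp (M s - M s0) * fst (snd (w s0))"
    if "s \<in> ?I" for s
    using scalar_linear_ode_exp[OF convex_real_interval(5) M _ s0 that] by blast
  then show thesis by (rule that)
qed

lemma langford_planar_form_along_solution:
  assumes v: "ode_solution (\<lambda>s p. g s *\<^sub>R langford a 0 0 a (-2*a) 0 p + k s *\<^sub>R rot_z_field p) {-T..T} v"
    and g: "continuous_on {-T..T} g"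
    and D: "\<And>s. s \<in> {-T..T} \<Longrightarrow> (D has_real_derivative k s) (at s within {-T..T})" and "D 0 = 0"
    and "0 \<in> {-T..T}" and s: "s \<in> {-T..T}"
  shows "langford_factor a (v s) * planar_form A3 A4 A5 (v s)
    = langford_invariant a (v 0) / ((fst (v 0))\<^sup>2 + (fst (snd (v 0)))\<^sup>2)
      * planar_form A3 A4 A5 (rot_z (- D s) (v 0))"
proof -
  let ?I = "{-T..T}"
  have "rot_z_equivariant (langford a 0 0 a (-2*a) 0)"
    using langford_rot_z_equivariant[of a 0 "-2*a" 0] by simp
  from ode_solution_derotate[OF this v D]
  have "ode_solution (\<lambda>s p. g s *\<^sub>R langford a 0 0 a (-2*a) 0 p) ?I (\<lambda>s. rot_z (D s) (v s))" .
  from langford_planar_scaling[OF this g \<open>0 \<in> ?I\<close>] obtain l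
    where l: "fst (rot_z (D s) (v s)) = l s * fst (v 0)"
      "fst (snd (rot_z (D s) (v s))) = l s * fst (snd (v 0))"
    using s \<open>D 0 = 0\<close> by auto
  obtain x y z where w: "rot_z (D s) (v s) = (x, y, z)" by (cases "rot_z (D s) (v s)")
  obtain e1 e2 e3 where e: "v 0 = (e1, e2, e3)" by (cases "v 0")
  have xy: "x = l s * e1" "y = l s * e2" using l by (simp_all add: w e)
  have "v s = rot_z (- D s) (x, y, z)" using rot_z_minus_cancel[of "D s" "v s"] by (simp only: w)
  then have planar: "fst (v s) = l s * fst (rot_z (- D s) (v 0))"
      "fst (snd (v s)) = l s * fst (snd (rot_z (- D s) (v 0)))"
    by (simp_all add: xy e algebra_simps)
  have "ode_solution (\<lambda>s p. g s *\<^sub>R langford a 0 (- 0) a (-2*a) 0 p + k s *\<^sub>R rot_z_field p) ?I v"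
    using v by simp
  from langford_invariant_const[OF this convex_real_interval(5) s \<open>0 \<in> ?I\<close>]
  have H: "langford_invariant a (v s) = langford_invariant a (v 0)" .
  have "langford_factor a (v s) * planar_form A3 A4 A5 (v s)
      = ((fst (v s))\<^sup>2 + (fst (snd (v s)))\<^sup>2) * langford_factor a (v s)
        / ((fst (rot_z (- D s) (v 0)))\<^sup>2 + (fst (snd (rot_z (- D s) (v 0))))\<^sup>2)
        * planar_form A3 A4 A5 (rot_z (- D s) (v 0))"
    by (rule planar_form_homogeneous[OF planar])
  also have "\<dots> = langford_invariant a (v 0) / ((fst (v 0))\<^sup>2 + (fst (snd (v 0)))\<^sup>2)
      * planar_form A3 A4 A5 (rot_z (- D s) (v 0))"
    by (simp only: rot_z_planar_norm langford_invariant_eq[symmetric] H)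
  finally show ?thesis .
qed

lemma langford_rotation_angle_even:
  assumes \<alpha>: "odd_cont \<alpha>2" "odd_cont \<alpha>3" "odd_cont \<alpha>4" "odd_cont \<alpha>5"
    and v: "ode_solution (\<lambda>s p. g s *\<^sub>R langford a 0 0 a (-2*a) 0 p + k s *\<^sub>R rot_z_field p) {-T..T} v"
    and g: "continuous_on {-T..T} g" and k_cont: "continuous_on {-T..T} k"
    and k: "\<And>s. s \<in> {-T..T} \<Longrightarrow>
      k s = \<alpha>2 s + langford_factor a (v s) * planar_form (\<alpha>3 s) (\<alpha>4 s) (\<alpha>5 s) (v s)"
    and t: "t \<in> {-T..T}"
  shows "integral {-T..t} k = integral {-T..-t} k"
proof -
  let ?I = "{-T..T}"
  have "0 \<in> ?I" using t by auto
  define D where "D s = integral {-T..s} k - integral {-T..0} k" for s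
  have D: "(D has_real_derivative k s) (at s within ?I)" if "s \<in> ?I" for s
    unfolding D_def has_real_derivative_iff_has_vector_derivative
    by (auto intro!: derivative_eq_intros integral_has_vector_derivative[OF k_cont that])
  define c where "c = langford_invariant a (v 0) / ((fst (v 0))\<^sup>2 + (fst (snd (v 0)))\<^sup>2)"
  define \<Phi> where "\<Phi> s d = \<alpha>2 s + c * planar_form (\<alpha>3 s) (\<alpha>4 s) (\<alpha>5 s) (rot_z (- d) (v 0))" for s d
  have "ode_solution \<Phi> ?I D"
    unfolding ode_solution_def
  proof
    fix s assume s: "s \<in> ?I"
    have "k s = \<Phi> s (D s)"
      using k[OF s] langford_planar_form_along_solution[OF v g D _ \<open>0 \<in> ?I\<close> s]
      by (simp add: \<Phi>_def c_def D_def)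
    with D[OF s] show "(D has_vector_derivative \<Phi> s (D s)) (at s within ?I)"
      by (simp add: has_real_derivative_iff_has_vector_derivative)
  qed
  moreover have "\<Phi> (- s) d = - \<Phi> s d" for s d
    by (simp add: \<Phi>_def planar_form_eq odd_cont_minus[OF \<alpha>(1)] odd_cont_minus[OF \<alpha>(2)]
        odd_cont_minus[OF \<alpha>(3)] odd_cont_minus[OF \<alpha>(4)] algebra_simps)
  moreover obtain L where "\<And>s. s \<in> ?I \<Longrightarrow> L-lipschitz_on UNIV (\<Phi> s)"
    using planar_form_rot_z_uniformly_lipschitz[OF odd_cont_continuous_on[OF \<alpha>(2)]
        odd_cont_continuous_on[OF \<alpha>(3)] odd_cont_continuous_on[OF \<alpha>(4)]]
    unfolding \<Phi>_def[abs_def] by blast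
  ultimately have "D (- t) = D t" using ode_solution_odd_field_even t by metis
  then show ?thesis by (simp add: D_def)
qed

section \<open>The four cases\<close>

lemma same_mrf_langford_scaled:
  assumes "odd_cont \<alpha>1"
  shows "same_mrf (langford a b c d e)
      (\<lambda>t (x, y, z). ((a*x + b*y + x*z) * (1 + \<alpha>1 t),
                       (c*x + d*y + y*z) * (1 + \<alpha>1 t),
                       (e*z - (x^2 + y^2 + z^2)) * (1 + \<alpha>1 t)))"
proof -
  have eq: "(\<lambda>t (x, y, z). ((a*x + b*y + x*z) * (1 + \<alpha>1 t), (c*x + d*y + y*z) * (1 + \<alpha>1 t),
      (e*z - (x^2 + y^2 + z^2)) * (1 + \<alpha>1 t))) = (\<lambda>t p. (1 + \<alpha>1 t) *\<^sub>R langford a b c d e 0 p)"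
    by (auto simp: fun_eq_iff langford_def algebra_simps)
  show ?thesis
    unfolding eq using same_mrf_odd_time_change[OF langford_locally_lipschitz assms]
    unfolding langford_def .
qed

lemma same_mrf_langford_rotating:
  assumes "odd_cont \<alpha>1" "odd_cont \<alpha>2" "odd_cont \<alpha>3"
  shows "same_mrf (langford a b (-b) a e)
      (\<lambda>t (x, y, z). ((a*x + b*y + x*z) * (1 + \<alpha>1 t) + x*(a + z)*\<alpha>2 t + y*\<alpha>3 t,
                       (-b*x + a*y + y*z) * (1 + \<alpha>1 t) + y*(a + z)*\<alpha>2 t - x*\<alpha>3 t,
                       (e*z - x^2 - y^2 - z^2) * (1 + \<alpha>1 t + \<alpha>2 t)))"
proof -
  have eq: "(\<lambda>t (x, y, z). ((a*x + b*y + x*z) * (1 + \<alpha>1 t) + x*(a + z)*\<alpha>2 t + y*\<alpha>3 t,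
      (-b*x + a*y + y*z) * (1 + \<alpha>1 t) + y*(a + z)*\<alpha>2 t - x*\<alpha>3 t,
      (e*z - x^2 - y^2 - z^2) * (1 + \<alpha>1 t + \<alpha>2 t)))
    = (\<lambda>t p. (1 + (\<alpha>1 t + \<alpha>2 t)) *\<^sub>R langford a b (-b) a e 0 p
        + (\<alpha>3 t - b * \<alpha>2 t) *\<^sub>R rot_z_field p)"
    by (auto simp: fun_eq_iff langford_def algebra_simps)
  show ?thesis
    unfolding eq using same_mrf_odd_rotating_time_change[OF langford_rot_z_equivariant
      langford_locally_lipschitz odd_cont_add[OF assms(1,2)]
      odd_cont_diff[OF assms(3) odd_cont_cmult[OF assms(2)]]]
    unfolding langford_def .
qed

lemma langford_rotating_invariant_reflection:
  assumes "odd_cont \<alpha>1" "odd_cont \<alpha>2" "odd_cont \<alpha>3" "odd_cont \<alpha>4"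
    and v: "ode_solution (\<lambda>s p. (1 + (\<alpha>1 s + \<alpha>2 s)) *\<^sub>R langford a b (-b) a (-2*a) 0 p
        + (\<alpha>3 s - b * \<alpha>2 s - \<alpha>4 s * langford_invariant a p) *\<^sub>R rot_z_field p) {-T..T} v"
    and u: "ode_solution (langford a b (-b) a (-2*a)) {-T..T} u"
    and t: "t \<in> {-T..T}" and "u t = v t"
  shows "u (- t) = v (- t)"
proof -
  let ?X = "langford a b (-b) a (-2*a) 0"
  have "ode_solution (\<lambda>s p. (1 + (\<alpha>1 s + \<alpha>2 s)) *\<^sub>R ?X p
      + (\<alpha>3 s - b * \<alpha>2 s - \<alpha>4 s * langford_invariant a (v s)) *\<^sub>R rot_z_field p) {-T..T} v"
    by (rule ode_solution_cong[OF v]) simp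
  from langford_invariant_const[OF this convex_real_interval(5) _ t]
  have v': "ode_solution (\<lambda>s p. (1 + (\<alpha>1 s + \<alpha>2 s)) *\<^sub>R ?X p
      + (\<alpha>3 s - b * \<alpha>2 s - langford_invariant a (v t) * \<alpha>4 s) *\<^sub>R rot_z_field p) {-T..T} v"
    by (intro ode_solution_cong[OF v]) (simp add: mult.commute)
  have u': "ode_solution (\<lambda>s. ?X) {-T..T} u"
    by (rule ode_solution_cong[OF u]) (simp add: langford_def)
  have \<beta>: "odd_cont (\<lambda>s. \<alpha>1 s + \<alpha>2 s)" by (rule odd_cont_add[OF assms(1,2)])
  have \<kappa>: "odd_cont (\<lambda>s. \<alpha>3 s - b * \<alpha>2 s - langford_invariant a (v t) * \<alpha>4 s)"
    by (intro odd_cont_diff odd_cont_cmult assms)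
  show ?thesis
    by (rule odd_rotating_time_change_reflection[OF langford_rot_z_equivariant
          langford_locally_lipschitz \<beta> \<kappa> v' u' t \<open>u t = v t\<close>])
qed

lemma same_mrf_langford_rotating_invariant:
  assumes "odd_cont \<alpha>1" "odd_cont \<alpha>2" "odd_cont \<alpha>3" "odd_cont \<alpha>4"
  shows "same_mrf (langford a b (-b) a (-2*a))
      (\<lambda>t (x, y, z). ((a*x + b*y + x*z) * (1 + \<alpha>1 t) + x*(a + z)*\<alpha>2 t + y*\<alpha>3 t
                          - y*(x^2 + y^2)*(4*a*z + x^2 + y^2 + 2*z^2)*\<alpha>4 t,
                       (-b*x + a*y + y*z) * (1 + \<alpha>1 t) + y*(a + z)*\<alpha>2 t - x*\<alpha>3 t
                          + x*(x^2 + y^2)*(4*a*z + x^2 + y^2 + 2*z^2)*\<alpha>4 t,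
                       -(2*a*z + x^2 + y^2 + z^2) * (1 + \<alpha>1 t + \<alpha>2 t)))"
proof -
  have eq: "(\<lambda>t (x, y, z). ((a*x + b*y + x*z) * (1 + \<alpha>1 t) + x*(a + z)*\<alpha>2 t + y*\<alpha>3 t
                          - y*(x^2 + y^2)*(4*a*z + x^2 + y^2 + 2*z^2)*\<alpha>4 t,
                       (-b*x + a*y + y*z) * (1 + \<alpha>1 t) + y*(a + z)*\<alpha>2 t - x*\<alpha>3 t
                          + x*(x^2 + y^2)*(4*a*z + x^2 + y^2 + 2*z^2)*\<alpha>4 t,
                       -(2*a*z + x^2 + y^2 + z^2) * (1 + \<alpha>1 t + \<alpha>2 t)))
    = (\<lambda>t p. (1 + (\<alpha>1 t + \<alpha>2 t)) *\<^sub>R langford a b (-b) a (-2*a) 0 p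
        + (\<alpha>3 t - b * \<alpha>2 t - \<alpha>4 t * langford_invariant a p) *\<^sub>R rot_z_field p)"
    by (auto simp: fun_eq_iff langford_def algebra_simps)
  show ?thesis
    unfolding eq by (rule same_mrfI) (rule langford_rotating_invariant_reflection[OF assms])
qed

lemma langford_state_dependent_rotation_reflection:
  assumes "odd_cont \<alpha>1" "odd_cont \<alpha>2" "odd_cont \<alpha>3" "odd_cont \<alpha>4" "odd_cont \<alpha>5"
    and v: "ode_solution (\<lambda>s p. (1 + \<alpha>1 s) *\<^sub>R langford a 0 0 a (-2*a) 0 p
        + (\<alpha>2 s + langford_factor a p * planar_form (\<alpha>3 s) (\<alpha>4 s) (\<alpha>5 s) p) *\<^sub>R rot_z_field p) {-T..T} v"
    and u: "ode_solution (langford a 0 0 a (-2*a)) {-T..T} u"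
    and t: "t \<in> {-T..T}" and "u t = v t"
  shows "u (- t) = v (- t)"
proof -
  let ?X = "langford a 0 0 a (-2*a) 0"
  define k where "k s = \<alpha>2 s + langford_factor a (v s) * planar_form (\<alpha>3 s) (\<alpha>4 s) (\<alpha>5 s) (v s)" for s
  have v': "ode_solution (\<lambda>s p. (1 + \<alpha>1 s) *\<^sub>R ?X p + k s *\<^sub>R rot_z_field p) {-T..T} v"
    by (rule ode_solution_cong[OF v]) (simp add: k_def)
  have u': "ode_solution (\<lambda>s. ?X) {-T..T} u"
    by (rule ode_solution_cong[OF u]) (simp add: langford_def)
  have X: "rot_z_equivariant ?X"
    using langford_rot_z_equivariant[of a 0 "-2*a" 0] by simp
  have g: "continuous_on {-T..T} (\<lambda>s. 1 + \<alpha>1 s)"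
    by (intro continuous_intros odd_cont_continuous_on[OF assms(1)])
  have k_cont: "continuous_on {-T..T} k"
    unfolding k_def langford_factor_eq planar_form_eq using ode_solution_continuous_on[OF v]
    by (intro continuous_intros odd_cont_continuous_on assms)
  show ?thesis
  proof (rule rotating_time_change_reflection[OF X langford_locally_lipschitz v' u' g k_cont t])
    show "integral {-T..- t} (\<lambda>s. 1 + \<alpha>1 s) - integral {-T..t} (\<lambda>s. 1 + \<alpha>1 s) = - t - t"
      by (rule integral_one_plus_odd[OF odd_cont_continuous_on[OF assms(1)] odd_cont_minus[OF assms(1)] t])
    show "integral {-T..t} k = integral {-T..- t} k"
      by (rule langford_rotation_angle_even[OF assms(2-5) v' g k_cont _ t]) (simp add: k_def)
  qed fact
qed

lemma same_mrf_langford_state_dependent_rotation: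
  assumes "odd_cont \<alpha>1" "odd_cont \<alpha>2" "odd_cont \<alpha>3" "odd_cont \<alpha>4" "odd_cont \<alpha>5"
  shows "same_mrf (langford a 0 0 a (-2*a))
      (\<lambda>t (x, y, z). ((a*x + x*z) * (1 + \<alpha>1 t) + y*\<alpha>2 t
                          + y*(4*a*z + x^2 + y^2 + 2*z^2)*(x^2*\<alpha>3 t + x*y*\<alpha>4 t + y^2*\<alpha>5 t),
                       (a*y + y*z) * (1 + \<alpha>1 t) - x*\<alpha>2 t
                          - x*(4*a*z + x^2 + y^2 + 2*z^2)*(x^2*\<alpha>3 t + x*y*\<alpha>4 t + y^2*\<alpha>5 t),
                       -(2*a*z + x^2 + y^2 + z^2) * (1 + \<alpha>1 t)))"
proof -
  have eq: "(\<lambda>t (x, y, z). ((a*x + x*z) * (1 + \<alpha>1 t) + y*\<alpha>2 t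
                          + y*(4*a*z + x^2 + y^2 + 2*z^2)*(x^2*\<alpha>3 t + x*y*\<alpha>4 t + y^2*\<alpha>5 t),
                       (a*y + y*z) * (1 + \<alpha>1 t) - x*\<alpha>2 t
                          - x*(4*a*z + x^2 + y^2 + 2*z^2)*(x^2*\<alpha>3 t + x*y*\<alpha>4 t + y^2*\<alpha>5 t),
                       -(2*a*z + x^2 + y^2 + z^2) * (1 + \<alpha>1 t)))
    = (\<lambda>t p. (1 + \<alpha>1 t) *\<^sub>R langford a 0 0 a (-2*a) 0 p
        + (\<alpha>2 t + langford_factor a p * planar_form (\<alpha>3 t) (\<alpha>4 t) (\<alpha>5 t) p) *\<^sub>R rot_z_field p)"
    by (auto simp: fun_eq_iff langford_def algebra_simps)
  show ?thesis
    unfolding eq by (rule same_mrfI) (rule langford_state_dependent_rotation_reflection[OF assms])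
qed

theorem theorem2:
  fixes a b c d e :: real and \<alpha>1 \<alpha>2 \<alpha>3 \<alpha>4 \<alpha>5 :: "real \<Rightarrow> real"
  assumes "odd_cont \<alpha>1" "odd_cont \<alpha>2" "odd_cont \<alpha>3" "odd_cont \<alpha>4" "odd_cont \<alpha>5"
  shows
   "(same_mrf (langford a b c d e)
      (\<lambda>t (x, y, z). ((a*x + b*y + x*z) * (1 + \<alpha>1 t),
                       (c*x + d*y + y*z) * (1 + \<alpha>1 t),
                       (e*z - (x^2 + y^2 + z^2)) * (1 + \<alpha>1 t))))
   \<and> (c = -b \<and> d = a \<longrightarrow> same_mrf (langford a b c d e)
      (\<lambda>t (x, y, z). ((a*x + b*y + x*z) * (1 + \<alpha>1 t) + x*(a + z)*\<alpha>2 t + y*\<alpha>3 t,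
                       (-b*x + a*y + y*z) * (1 + \<alpha>1 t) + y*(a + z)*\<alpha>2 t - x*\<alpha>3 t,
                       (e*z - x^2 - y^2 - z^2) * (1 + \<alpha>1 t + \<alpha>2 t))))
   \<and> (c = -b \<and> d = a \<and> e = -2*a \<longrightarrow> same_mrf (langford a b c d e)
      (\<lambda>t (x, y, z). ((a*x + b*y + x*z) * (1 + \<alpha>1 t) + x*(a + z)*\<alpha>2 t + y*\<alpha>3 t
                          - y*(x^2 + y^2)*(4*a*z + x^2 + y^2 + 2*z^2)*\<alpha>4 t,
                       (-b*x + a*y + y*z) * (1 + \<alpha>1 t) + y*(a + z)*\<alpha>2 t - x*\<alpha>3 t
                          + x*(x^2 + y^2)*(4*a*z + x^2 + y^2 + 2*z^2)*\<alpha>4 t,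
                       -(2*a*z + x^2 + y^2 + z^2) * (1 + \<alpha>1 t + \<alpha>2 t))))
   \<and> (c = 0 \<and> b = 0 \<and> d = a \<and> e = -2*a \<longrightarrow> same_mrf (langford a b c d e)
      (\<lambda>t (x, y, z). ((a*x + x*z) * (1 + \<alpha>1 t) + y*\<alpha>2 t
                          + y*(4*a*z + x^2 + y^2 + 2*z^2)*(x^2*\<alpha>3 t + x*y*\<alpha>4 t + y^2*\<alpha>5 t),
                       (a*y + y*z) * (1 + \<alpha>1 t) - x*\<alpha>2 t
                          - x*(4*a*z + x^2 + y^2 + 2*z^2)*(x^2*\<alpha>3 t + x*y*\<alpha>4 t + y^2*\<alpha>5 t),
                       -(2*a*z + x^2 + y^2 + z^2) * (1 + \<alpha>1 t))))"
  by (intro conjI impI; (elim conjE, hypsubst)?;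
      rule same_mrf_langford_scaled same_mrf_langford_rotating same_mrf_langford_rotating_invariant
        same_mrf_langford_state_dependent_rotation; rule assms)

end
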